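(* Let $X$ be a real Banach space and $\varepsilon>0$. Let $C\subseteq X$ be closed, bounded, convex and non-$\varepsilon$-dentable, let $C'\subseteq C$ be closed and convex, and let $D\subseteq C$ satisfy $\alpha(D)<\varepsilon$. If $C=\overline{\operatorname{co}}(C'\cup D)$, then $C=C'$.
   Context: $\overline{\operatorname{co}}(E)$ denotes the norm-closed convex hull of $E$. For $A\subseteq X$, the Kuratowski measure of noncompactness $\alpha(A)$ is the infimum of all $\varepsilon>0$ such that $A$ can be covered by finitely many sets of diameter at most $\varepsilon$. For a bounded nonempty $A\subseteq X$, $f$ in the closed unit ball of $X^*$ and $\delta>0$, the slice $S(f,A,\delta)=\{a\in A: f(a)>\sup f(A)-\delta\}$; a slice of $A$ is any set of this form. A bounded set $A$ is non-$\varepsilon$-dentable if every slice of $A$ has diameter $>\varepsilon$. *)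

theory Defs
  imports "HOL-Analysis.Analysis"
begin

definition closed_convex_hull :: "'a::real_normed_vector set \<Rightarrow> 'a set" where
  "closed_convex_hull E = closure (convex hull E)"

definition dual_unit_ball :: "('a::real_normed_vector \<Rightarrow> real) set" where
  "dual_unit_ball = {f. bounded_linear f \<and> onorm f \<le> 1}"

definition slice :: "('a::real_normed_vector \<Rightarrow> real) \<Rightarrow> 'a set \<Rightarrow> real \<Rightarrow> 'a set" where
  "slice f A \<delta> = {a \<in> A. f a > Sup (f ` A) - \<delta>}"

definition non_eps_dentable :: "real \<Rightarrow> 'a::real_normed_vector set \<Rightarrow> bool" where
  "non_eps_dentable \<epsilon> A \<longleftrightarrow> bounded A \<and> A \<noteq> {} \<and>
     (\<forall>f \<in> dual_unit_ball. \<forall>\<delta>>0. diameter (slice f A \<delta>) > \<epsilon>)"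

text \<open>Kuratowski measure of noncompactness (value \<infinity> if no finite cover by
  bounded sets exists). Sets of diameter at most e are in particular bounded.\<close>
definition kuratowski_mnc :: "'a::real_normed_vector set \<Rightarrow> ereal" where
  "kuratowski_mnc A = Inf {ereal e | e. e > 0 \<and>
     (\<exists>F. finite F \<and> A \<subseteq> \<Union>F \<and> (\<forall>S\<in>F. bounded S \<and> diameter S \<le> e))}"

end

theory Submission
  imports Defs
begin

text \<open>Cover \<open>D\<close> by finitely many sets of diameter less than \<open>\<epsilon>\<close> and absorb them into \<open>C'\<close>
  one at a time; it then suffices to show \<open>C = A\<close> whenever \<open>C = cl co (A \<union> K)\<close> with \<open>A\<close>
  closed convex and \<open>diam K < \<epsilon>\<close>. Otherwise a point of \<open>C - A\<close> is separated from \<open>A\<close> by a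
  functional \<open>f\<close> of norm at most one with a gap \<open>d > 0\<close> (Hahn-Banach, obtained from Zorn's
  lemma on sublinear functionals). A point \<open>y = \<lambda> a + (1 - \<lambda>) k\<close> of \<open>co (A \<union> K)\<close> satisfies
  \<open>sup f C - f y \<ge> \<lambda> d\<close> and \<open>\<parallel>y - k\<parallel> \<le> \<lambda> diam C\<close>, so a thin slice of \<open>C\<close> cut out by \<open>f\<close>
  lies close to \<open>co K\<close> and has diameter barely above \<open>diam K < \<epsilon>\<close>, contradicting
  non-\<open>\<epsilon>\<close>-dentability.\<close>

section \<open>Sublinear functionals and the Hahn-Banach theorem\<close>

definition sublinear :: "('a::real_vector \<Rightarrow> real) \<Rightarrow> bool" where
  "sublinear q \<longleftrightarrow> (\<forall>x y. q (x + y) \<le> q x + q y) \<and> (\<forall>t x. t > 0 \<longrightarrow> q (t *\<^sub>R x) \<le> t * q x)"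

lemma sublinear_add_le: "sublinear q \<Longrightarrow> q (x + y) \<le> q x + q y"
  by (simp add: sublinear_def)

lemma sublinear_scaleR_pos:
  assumes "sublinear q" "t > 0"
  shows "q (t *\<^sub>R x) = t * q x"
proof (rule antisym)
  show "q (t *\<^sub>R x) \<le> t * q x"
    using assms by (simp add: sublinear_def)
  have "q (inverse t *\<^sub>R (t *\<^sub>R x)) \<le> inverse t * q (t *\<^sub>R x)"
    using assms unfolding sublinear_def by (meson positive_imp_inverse_positive)
  then have "q x \<le> inverse t * q (t *\<^sub>R x)"
    using assms by simp
  then show "t * q x \<le> q (t *\<^sub>R x)"
    using assms by (simp add: field_simps)
qed

lemma sublinear_zero: "sublinear q \<Longrightarrow> q 0 = 0"
  using sublinear_scaleR_pos[of q 2 0] by simp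

lemma sublinear_scaleR_nonneg: "sublinear q \<Longrightarrow> t \<ge> 0 \<Longrightarrow> q (t *\<^sub>R x) = t * q x"
  by (cases "t = 0") (simp_all add: sublinear_zero sublinear_scaleR_pos)

lemma sublinear_ge_neg_uminus: "sublinear q \<Longrightarrow> - q (- x) \<le> q x"
  using sublinear_add_le[of q x "- x"] by (simp add: sublinear_zero)

lemma sublinear_Inf:
  fixes E :: "'a::real_vector \<Rightarrow> real set"
  assumes ne: "\<And>v. E v \<noteq> {}" and bdd: "\<And>v. bdd_below (E v)"
    and add: "\<And>v w e1 e2. e1 \<in> E v \<Longrightarrow> e2 \<in> E w \<Longrightarrow> \<exists>e\<in>E (v + w). e \<le> e1 + e2"
    and scale: "\<And>v t e. t > 0 \<Longrightarrow> e \<in> E v \<Longrightarrow> \<exists>e'\<in>E (t *\<^sub>R v). e' \<le> t * e"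
  shows "sublinear (\<lambda>v. Inf (E v))"
  unfolding sublinear_def
proof (intro conjI allI impI)
  have lower: "Inf (E v) \<le> e" if "e \<in> E v" for v e
    using that bdd by (rule cInf_lower)
  have greatest: "c \<le> Inf (E v)" if "\<And>e. e \<in> E v \<Longrightarrow> c \<le> e" for c v
    using ne that by (rule cInf_greatest)
  fix v w
  have Inf_add_le: "Inf (E (v + w)) \<le> e1 + e2" if "e1 \<in> E v" "e2 \<in> E w" for e1 e2
    using add[OF that] lower order_trans by blast
  have "Inf (E (v + w)) - e2 \<le> Inf (E v)" if "e2 \<in> E w" for e2
    using Inf_add_le[OF _ that] by (intro greatest) (simp add: algebra_simps)
  then have "Inf (E (v + w)) - Inf (E v) \<le> Inf (E w)"
    by (intro greatest) (simp add: algebra_simps)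
  then show "Inf (E (v + w)) \<le> Inf (E v) + Inf (E w)" by simp
next
  fix t :: real and v :: 'a
  assume t: "t > 0"
  have "Inf (E (t *\<^sub>R v)) \<le> t * e" if "e \<in> E v" for e
    using scale[OF t that] bdd by (meson cInf_lower order_trans)
  then have "Inf (E (t *\<^sub>R v)) / t \<le> Inf (E v)"
    using t ne bdd by (intro cInf_greatest) (auto simp: divide_le_eq mult.commute)
  then show "Inf (E (t *\<^sub>R v)) \<le> t * Inf (E v)"
    using t by (simp add: divide_le_eq mult.commute)
qed

lemma bdd_below_sublinear_dominated:
  assumes "\<And>q. q \<in> C \<Longrightarrow> sublinear q" "\<And>q x. q \<in> C \<Longrightarrow> q x \<le> p x"
  shows "bdd_below ((\<lambda>q. q x) ` C)"
proof (rule bdd_belowI2)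
  fix q assume "q \<in> C"
  then show "- p (- x) \<le> q x"
    using sublinear_ge_neg_uminus[OF assms(1), of q x] assms(2)[of q "- x"] by linarith
qed

lemma sublinear_INF_chain:
  fixes C :: "('a::real_vector \<Rightarrow> real) set"
  assumes ne: "C \<noteq> {}" and sub: "\<And>q. q \<in> C \<Longrightarrow> sublinear q"
    and dom: "\<And>q x. q \<in> C \<Longrightarrow> q x \<le> p x"
    and chain: "\<And>q1 q2. q1 \<in> C \<Longrightarrow> q2 \<in> C \<Longrightarrow> (\<forall>x. q1 x \<le> q2 x) \<or> (\<forall>x. q2 x \<le> q1 x)"
  shows "sublinear (\<lambda>x. INF q\<in>C. q x)"
proof (rule sublinear_Inf)
  show "bdd_below ((\<lambda>q. q x) ` C)" for x
    using sub dom by (rule bdd_below_sublinear_dominated)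
  show "\<exists>e\<in>(\<lambda>q. q (x + y)) ` C. e \<le> e1 + e2"
    if e: "e1 \<in> (\<lambda>q. q x) ` C" "e2 \<in> (\<lambda>q. q y) ` C" for x y e1 e2
  proof -
    obtain q1 q2 where q: "q1 \<in> C" "q2 \<in> C" "e1 = q1 x" "e2 = q2 y"
      using e by blast
    \<comment> \<open>the smaller of the two functionals witnesses the bound\<close>
    then obtain q where q: "q \<in> C" "q x \<le> e1" "q y \<le> e2"
      using chain[OF q(1,2)] by fastforce
    then have "q (x + y) \<le> e1 + e2"
      using sublinear_add_le[OF sub[OF q(1)], of x y] by linarith
    then show ?thesis
      using q(1) by blast
  qed
  show "\<exists>e'\<in>(\<lambda>q. q (t *\<^sub>R x)) ` C. e' \<le> t * e"
    if "t > 0" "e \<in> (\<lambda>q. q x) ` C" for x t e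
    using that sublinear_scaleR_pos[OF sub] by force
qed (use ne in auto)

lemma bdd_below_directional:
  assumes "sublinear m"
  shows "bdd_below ((\<lambda>t. m (z + t *\<^sub>R y) - t * m y) ` {0..})"
proof (rule bdd_belowI2)
  fix t :: real assume "t \<in> {0..}"
  moreover have "m (t *\<^sub>R y) \<le> m (z + t *\<^sub>R y) + m (- z)"
    using sublinear_add_le[OF assms, of "z + t *\<^sub>R y" "- z"] by simp
  ultimately show "- m (- z) \<le> m (z + t *\<^sub>R y) - t * m y"
    using sublinear_scaleR_nonneg[OF assms] by simp
qed

lemma sublinear_directional_INF:
  assumes m: "sublinear m"
  shows "sublinear (\<lambda>z. INF t\<in>{0..}. m (z + t *\<^sub>R y) - t * m y)"
proof (rule sublinear_Inf)
  show "\<exists>e\<in>(\<lambda>t. m (z1 + z2 + t *\<^sub>R y) - t * m y) ` {0..}. e \<le> e1 + e2"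
    if e: "e1 \<in> (\<lambda>t. m (z1 + t *\<^sub>R y) - t * m y) ` {0..}"
       "e2 \<in> (\<lambda>t. m (z2 + t *\<^sub>R y) - t * m y) ` {0..}" for z1 z2 e1 e2
  proof -
    obtain t1 t2 where t: "t1 \<ge> 0" "t2 \<ge> 0"
      "e1 = m (z1 + t1 *\<^sub>R y) - t1 * m y" "e2 = m (z2 + t2 *\<^sub>R y) - t2 * m y"
      using e by auto
    have "z1 + z2 + (t1 + t2) *\<^sub>R y = (z1 + t1 *\<^sub>R y) + (z2 + t2 *\<^sub>R y)"
      by (simp add: algebra_simps)
    then have "m (z1 + z2 + (t1 + t2) *\<^sub>R y) - (t1 + t2) * m y \<le> e1 + e2"
      using sublinear_add_le[OF m, of "z1 + t1 *\<^sub>R y" "z2 + t2 *\<^sub>R y"] t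
      by (simp add: algebra_simps)
    then show ?thesis
      using t by force
  qed
  show "\<exists>e'\<in>(\<lambda>t. m (s *\<^sub>R z + t *\<^sub>R y) - t * m y) ` {0..}. e' \<le> s * e"
    if s: "s > 0" and e: "e \<in> (\<lambda>t. m (z + t *\<^sub>R y) - t * m y) ` {0..}" for s z e
  proof -
    obtain t where t: "t \<ge> 0" "e = m (z + t *\<^sub>R y) - t * m y"
      using e by auto
    have "s *\<^sub>R z + (s * t) *\<^sub>R y = s *\<^sub>R (z + t *\<^sub>R y)"
      by (simp add: algebra_simps)
    then have "m (s *\<^sub>R z + (s * t) *\<^sub>R y) = s * m (z + t *\<^sub>R y)"
      using sublinear_scaleR_pos[OF m s] by simp
    then have "m (s *\<^sub>R z + (s * t) *\<^sub>R y) - (s * t) * m y = s * e"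
      using t by (simp add: right_diff_distrib)
    then show ?thesis
      using s t by (intro bexI[OF _ imageI[of "s * t"]]) auto
  qed
qed (use bdd_below_directional[OF m] in auto)

text \<open>A sublinear functional that is minimal among sublinear functionals is linear: otherwise
  the infimum along a ray in some direction \<open>y\<close> would be a strictly smaller sublinear one.\<close>

lemma minimal_sublinear_imp_linear:
  assumes m: "sublinear m" and minimal: "\<And>r. sublinear r \<Longrightarrow> (\<forall>x. r x \<le> m x) \<Longrightarrow> r = m"
  shows "linear m"
proof -
  have additive: "m (x + y) = m x + m y" for x y
  proof -
    define r where "r = (\<lambda>z. INF t\<in>{0..}. m (z + t *\<^sub>R y) - t * m y)"
    have r_le: "r z \<le> m (z + t *\<^sub>R y) - t * m y" if "t \<ge> 0" for z t
      unfolding r_def using that bdd_below_directional[OF m] by (intro cINF_lower) auto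
    have "r = m"
      using r_le[of 0] by (intro minimal) (simp_all add: r_def sublinear_directional_INF[OF m])
    then have "m x + m y \<le> m (x + y)"
      using r_le[of 1 x] by simp
    then show ?thesis
      using sublinear_add_le[OF m] by (simp add: antisym)
  qed
  have "m (c *\<^sub>R x) = c * m x" for c x
  proof (cases "c \<ge> 0")
    case False
    have "m (c *\<^sub>R x) + m ((- c) *\<^sub>R x) = 0"
      using additive[of "c *\<^sub>R x" "(- c) *\<^sub>R x"] sublinear_zero[OF m]
      by (simp add: scaleR_left_distrib[symmetric])
    then show ?thesis
      using sublinear_scaleR_nonneg[OF m, of "- c" x] False by simp
  qed (simp add: sublinear_scaleR_nonneg[OF m])
  then show ?thesis
    using additive by (simp add: linear_iff)
qed

lemma hahn_banach_sublinear:
  fixes p :: "'a::real_vector \<Rightarrow> real"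
  assumes p: "sublinear p"
  shows "\<exists>f. linear f \<and> (\<forall>x. f x \<le> p x)"
proof -
  define A where "A = {q. sublinear q \<and> (\<forall>x. q x \<le> p x)}"
  define below where "below = (\<lambda>(q::'a \<Rightarrow> real) r. \<forall>x. r x \<le> q x)"
  have po: "partial_order_on A (relation_of below A)"
    by (rule partial_order_on_relation_ofI)
      (auto simp: below_def fun_eq_iff intro: order_trans antisym)
  have "\<exists>u\<in>A. \<forall>q\<in>C. below q u" if C: "C \<in> Chains (relation_of below A)" for C
  proof (cases "C = {}")
    case False
    have CA: "sublinear q" "\<And>x. q x \<le> p x" if "q \<in> C" for q
      using C that by (auto simp: Chains_def relation_of_def A_def)
    have chain: "(\<forall>x. q1 x \<le> q2 x) \<or> (\<forall>x. q2 x \<le> q1 x)" if "q1 \<in> C" "q2 \<in> C" for q1 q2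
      using C that by (auto simp: Chains_def relation_of_def below_def)
    define u where "u = (\<lambda>x. INF q\<in>C. q x)"
    have "bdd_below ((\<lambda>q. q x) ` C)" for x
      using CA by (rule bdd_below_sublinear_dominated)
    then have u_le: "u x \<le> q x" if "q \<in> C" for q x
      unfolding u_def using that by (rule cINF_lower)
    obtain q0 where q0: "q0 \<in> C"
      using False by blast
    have "sublinear u"
      unfolding u_def by (rule sublinear_INF_chain[of C p]) (use False CA chain in auto)
    moreover have "u x \<le> p x" for x
      using u_le[OF q0] CA(2)[OF q0] by (rule order_trans)
    ultimately have "u \<in> A"
      by (simp add: A_def)
    then show ?thesis
      using u_le by (auto simp: below_def)
  qed (use p in \<open>auto simp: A_def\<close>)
  then obtain m where "m \<in> A" and "\<And>q. q \<in> A \<Longrightarrow> below m q \<Longrightarrow> q = m"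
    using predicate_Zorn[OF po] by blast
  then have "linear m"
    by (intro minimal_sublinear_imp_linear) (auto simp: A_def below_def intro: order_trans)
  with \<open>m \<in> A\<close> show ?thesis
    by (auto simp: A_def)
qed

section \<open>Separation from closed convex sets\<close>

text \<open>If \<open>d \<le> dist x a\<close> on \<open>A\<close>, this functional is dominated by the norm and is at most
  \<open>-d\<close> at every \<open>a - x\<close>, so any linear minorant of it separates \<open>x\<close> from \<open>A\<close> by \<open>d\<close>.\<close>

definition separation_gauge :: "'a::real_normed_vector set \<Rightarrow> 'a \<Rightarrow> real \<Rightarrow> 'a \<Rightarrow> real" where
  "separation_gauge A x d v = (INF (l, a)\<in>{0..} \<times> A. norm (v + l *\<^sub>R (x - a)) - l * d)"

lemma bdd_below_separation_gauge:
  assumes "\<And>a. a \<in> A \<Longrightarrow> d \<le> norm (x - a)"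
  shows "bdd_below ((\<lambda>(l, a). norm (v + l *\<^sub>R (x - a)) - l * d) ` ({0..} \<times> A))"
proof (rule bdd_belowI2)
  fix la :: "real \<times> 'a" assume "la \<in> {0..} \<times> A"
  then obtain l :: real and a where la: "la = (l, a)" "l \<ge> 0" "a \<in> A"
    by auto
  then have "l * d \<le> norm (l *\<^sub>R (x - a))"
    using assms by (simp add: mult_left_mono)
  also have "\<dots> \<le> norm (v + l *\<^sub>R (x - a)) + norm v"
    using norm_triangle_ineq4[of "v + l *\<^sub>R (x - a)" v] by simp
  finally show "- norm v \<le> (\<lambda>(l, a). norm (v + l *\<^sub>R (x - a)) - l * d) la"
    using la(1) by simp
qed

lemma separation_gauge_le:
  assumes "\<And>a. a \<in> A \<Longrightarrow> d \<le> norm (x - a)" "l \<ge> 0" "a \<in> A"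
  shows "separation_gauge A x d v \<le> norm (v + l *\<^sub>R (x - a)) - l * d"
proof -
  have "separation_gauge A x d v \<le> (\<lambda>(l, a). norm (v + l *\<^sub>R (x - a)) - l * d) (l, a)"
    unfolding separation_gauge_def using assms by (intro cINF_lower bdd_below_separation_gauge) auto
  then show ?thesis
    by simp
qed

lemma sublinear_separation_gauge:
  assumes A: "convex A" "A \<noteq> {}" and d: "\<And>a. a \<in> A \<Longrightarrow> d \<le> norm (x - a)"
  shows "sublinear (separation_gauge A x d)"
  unfolding separation_gauge_def[abs_def]
proof (rule sublinear_Inf)
  let ?g = "\<lambda>v (l, a). norm (v + l *\<^sub>R (x - a)) - l * d"
  show "\<exists>e\<in>?g (v + w) ` ({0..} \<times> A). e \<le> e1 + e2"
    if e: "e1 \<in> ?g v ` ({0..} \<times> A)" "e2 \<in> ?g w ` ({0..} \<times> A)" for v w e1 e2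
  proof -
    obtain l1 a1 l2 a2 where la: "l1 \<ge> 0" "a1 \<in> A" "e1 = norm (v + l1 *\<^sub>R (x - a1)) - l1 * d"
      "l2 \<ge> 0" "a2 \<in> A" "e2 = norm (w + l2 *\<^sub>R (x - a2)) - l2 * d"
      using e by auto
    \<comment> \<open>the two shifts combine into one shift towards a convex combination of \<open>a1\<close> and \<open>a2\<close>\<close>
    obtain a where a: "a \<in> A" "(l1 + l2) *\<^sub>R a = l1 *\<^sub>R a1 + l2 *\<^sub>R a2"
    proof (cases "l1 + l2 = 0")
      case False
      then have "(l1 / (l1 + l2)) *\<^sub>R a1 + (l2 / (l1 + l2)) *\<^sub>R a2 \<in> A"
        using la by (intro convexD[OF A(1)]) (auto simp: add_divide_distrib[symmetric])
      with False show thesis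
        by (intro that) (auto simp: scaleR_add_right)
    next
      case True
      then have "l1 = 0" "l2 = 0"
        using la by auto
      with la show thesis
        by (intro that[of a1]) auto
    qed
    have "v + w + (l1 + l2) *\<^sub>R (x - a) = (v + l1 *\<^sub>R (x - a1)) + (w + l2 *\<^sub>R (x - a2))"
      using a(2) by (simp add: algebra_simps)
    then have "?g (v + w) (l1 + l2, a) \<le> e1 + e2"
      using norm_triangle_ineq[of "v + l1 *\<^sub>R (x - a1)" "w + l2 *\<^sub>R (x - a2)"] la
      by (simp add: algebra_simps)
    then show ?thesis
      using la a(1) by (intro bexI[OF _ imageI[of "(l1 + l2, a)"]]) auto
  qed
  show "\<exists>e'\<in>?g (t *\<^sub>R v) ` ({0..} \<times> A). e' \<le> t * e"
    if t: "t > 0" and e: "e \<in> ?g v ` ({0..} \<times> A)" for t v e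
  proof -
    obtain l a where la: "l \<ge> 0" "a \<in> A" "e = norm (v + l *\<^sub>R (x - a)) - l * d"
      using e by auto
    have "t *\<^sub>R v + (t * l) *\<^sub>R (x - a) = t *\<^sub>R (v + l *\<^sub>R (x - a))"
      by (simp add: algebra_simps)
    then have "?g (t *\<^sub>R v) (t * l, a) = t * e"
      using t la by (simp add: right_diff_distrib)
    then show ?thesis
      using t la by (intro bexI[OF _ imageI[of "(t * l, a)"]]) auto
  qed
qed (use A(2) bdd_below_separation_gauge[OF d] in auto)

lemma separation_closed_convex:
  fixes A :: "'a::real_normed_vector set"
  assumes A: "closed A" "convex A" and x: "x \<notin> A"
  shows "\<exists>f\<in>dual_unit_ball. \<exists>d>0. \<forall>a\<in>A. f a + d \<le> f x"
proof (cases "A = {}")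
  case True
  then show ?thesis
    by (intro bexI[of _ "\<lambda>_. 0"] exI[of _ 1]) (auto simp: dual_unit_ball_def onorm_zero)
next
  case False
  define d where "d = infdist x A"
  have d_pos: "d > 0"
    unfolding d_def using A(1) False x by (rule infdist_pos_not_in_closed)
  have d_le: "d \<le> norm (x - a)" if "a \<in> A" for a
    using infdist_le[OF that, of x] by (simp add: d_def dist_norm)
  let ?p = "separation_gauge A x d"
  obtain f where f: "linear f" "\<And>v. f v \<le> ?p v"
    using hahn_banach_sublinear[OF sublinear_separation_gauge[OF A(2) False d_le]] by blast
  obtain a0 where "a0 \<in> A"
    using False by blast
  then have p_le_norm: "?p v \<le> norm v" for v
    using separation_gauge_le[of A d x 0 a0 v, OF d_le] by simp
  have f_norm: "\<bar>f v\<bar> \<le> norm v" for v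
    using f(2)[of v] f(2)[of "- v"] p_le_norm[of v] p_le_norm[of "- v"] linear_neg[OF f(1), of v]
    by simp
  have "bounded_linear f"
    using f(1) f_norm by (intro bounded_linear_intro[where K=1]) (auto simp: linear_add linear_scale)
  then have "f \<in> dual_unit_ball"
    using f_norm by (auto simp: dual_unit_ball_def intro: onorm_bound)
  moreover have "f a + d \<le> f x" if "a \<in> A" for a
    using f(2)[of "a - x"] separation_gauge_le[of A d x 1 a "a - x", OF d_le] that linear_diff[OF f(1)]
    by simp
  ultimately show ?thesis
    using d_pos by blast
qed

section \<open>Closed convex hulls and their slices\<close>

lemma closed_convex_hull_eq_hull:
  "closed_convex_hull X = (\<lambda>S. closed S \<and> convex S) hull X"
  unfolding closed_convex_hull_def
proof (rule hull_unique[symmetric])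
  show "X \<subseteq> closure (convex hull X)"
    by (rule subset_trans[OF hull_subset closure_subset])
  show "closed (closure (convex hull X)) \<and> convex (closure (convex hull X))"
    using convex_closure[OF convex_convex_hull] by simp
  show "closure (convex hull X) \<subseteq> T" if "X \<subseteq> T" "closed T \<and> convex T" for T
    using that hull_minimal[of X T convex] by (intro closure_minimal) auto
qed

lemma diameter_convex_hull:
  fixes S :: "'a::real_normed_vector set"
  assumes "bounded S"
  shows "diameter (convex hull S) = diameter S"
proof (rule antisym)
  have hull_cball: "convex hull S \<subseteq> cball x (diameter S)" if "S \<subseteq> cball x (diameter S)" for x
    using that by (intro hull_minimal) auto
  have S_cball: "S \<subseteq> cball x (diameter S)" if "x \<in> convex hull S" for x
  proof
    fix y assume "y \<in> S"
    then have "S \<subseteq> cball y (diameter S)"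
      using diameter_bounded_bound[OF assms] by auto
    then have "x \<in> cball y (diameter S)"
      using hull_cball that by blast
    then show "y \<in> cball x (diameter S)"
      by (simp add: dist_commute)
  qed
  have "dist x y \<le> diameter S" if x: "x \<in> convex hull S" and y: "y \<in> convex hull S" for x y
    using subsetD[OF hull_cball[OF S_cball[OF x]] y] by simp
  then show "diameter (convex hull S) \<le> diameter S"
    using assms by (intro diameter_le) (auto simp: diameter_ge_0 dist_norm)
  show "diameter S \<le> diameter (convex hull S)"
    using assms by (intro diameter_subset hull_subset bounded_convex_hull)
qed

lemma bounded_UN_cball:
  fixes S :: "'a::real_normed_vector set"
  assumes "bounded S"
  shows "bounded (\<Union>k\<in>S. cball k \<rho>)"
proof -
  obtain B where B: "\<And>k. k \<in> S \<Longrightarrow> norm k \<le> B"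
    using assms bounded_iff by blast
  have "norm y \<le> B + \<rho>" if "k \<in> S" "dist k y \<le> \<rho>" for k y
    using norm_triangle_sub[of y k] B[OF that(1)] that(2) by (simp add: dist_norm norm_minus_commute)
  then have "(\<Union>k\<in>S. cball k \<rho>) \<subseteq> cball 0 (B + \<rho>)"
    by auto
  then show ?thesis
    using bounded_cball bounded_subset by blast
qed

lemma diameter_UN_cball_le:
  fixes S :: "'a::real_normed_vector set"
  assumes "bounded S" "\<rho> \<ge> 0"
  shows "diameter (\<Union>k\<in>S. cball k \<rho>) \<le> diameter S + 2 * \<rho>"
proof (rule diameter_le)
  show "(\<Union>k\<in>S. cball k \<rho>) \<noteq> {} \<or> 0 \<le> diameter S + 2 * \<rho>"
    using assms diameter_ge_0 by auto
  fix y1 y2 assume "y1 \<in> (\<Union>k\<in>S. cball k \<rho>)" "y2 \<in> (\<Union>k\<in>S. cball k \<rho>)"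
  then obtain k1 k2 where k: "k1 \<in> S" "k2 \<in> S" "dist k1 y1 \<le> \<rho>" "dist k2 y2 \<le> \<rho>"
    by auto
  have "dist y1 y2 \<le> dist y1 k1 + dist k1 k2 + dist k2 y2"
    using dist_triangle[of y1 y2 k1] dist_triangle[of k1 y2 k2] by linarith
  also have "\<dots> \<le> \<rho> + diameter S + \<rho>"
    using k diameter_bounded_bound[OF assms(1) k(1,2)] by (simp add: dist_commute)
  finally show "norm (y1 - y2) \<le> diameter S + 2 * \<rho>"
    by (simp add: dist_norm)
qed

lemma convex_near_convex_set:
  fixes g :: "'a::real_normed_vector \<Rightarrow> real"
  assumes "convex K" "linear g"
  shows "convex {y. \<exists>k\<in>K. norm (y - k) \<le> c - g y}"
proof (rule convexI, clarify)
  fix y1 y2 k1 k2 and u v :: real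
  assume k: "k1 \<in> K" "norm (y1 - k1) \<le> c - g y1" "k2 \<in> K" "norm (y2 - k2) \<le> c - g y2"
    and uv: "0 \<le> u" "0 \<le> v" "u + v = 1"
  have "norm ((u *\<^sub>R y1 + v *\<^sub>R y2) - (u *\<^sub>R k1 + v *\<^sub>R k2))
      = norm (u *\<^sub>R (y1 - k1) + v *\<^sub>R (y2 - k2))"
    by (simp add: algebra_simps)
  also have "\<dots> \<le> u * norm (y1 - k1) + v * norm (y2 - k2)"
    using norm_triangle_ineq[of "u *\<^sub>R (y1 - k1)" "v *\<^sub>R (y2 - k2)"] uv by simp
  also have "\<dots> \<le> u * (c - g y1) + v * (c - g y2)"
    using k uv by (intro add_mono mult_left_mono) auto
  also have "\<dots> = c - g (u *\<^sub>R y1 + v *\<^sub>R y2)"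
    using uv assms(2) by (simp add: linear_add linear_scale algebra_simps flip: distrib_left)
  finally show "\<exists>k\<in>K. norm (u *\<^sub>R y1 + v *\<^sub>R y2 - k) \<le> c - g (u *\<^sub>R y1 + v *\<^sub>R y2)"
    using convexD[OF assms(1) k(1,3) uv] by blast
qed

lemma convex_hull_Un_near_convex_hull:
  fixes f :: "'a::real_normed_vector \<Rightarrow> real"
  assumes f: "linear f" and K: "K \<noteq> {}" and d: "d > 0" and "M \<ge> 0"
    and below: "\<And>a. a \<in> A \<Longrightarrow> f a + d \<le> s" "\<And>k. k \<in> K \<Longrightarrow> f k \<le> s"
    and M: "\<And>a k. a \<in> A \<Longrightarrow> k \<in> K \<Longrightarrow> norm (a - k) \<le> M"
    and y: "y \<in> convex hull (A \<union> K)"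
  shows "\<exists>k\<in>convex hull K. norm (y - k) \<le> M / d * (s - f y)"
proof -
  let ?T = "{y. \<exists>k\<in>convex hull K. norm (y - k) \<le> M / d * s - (M / d) * f y}"
  have "linear (\<lambda>y. M / d * f y)"
    using linear_compose[OF f linear_times, of "M / d"] by (simp only: o_def)
  then have "convex ?T"
    by (intro convex_near_convex_set convex_convex_hull)
  moreover have "A \<subseteq> ?T"
  proof
    fix a assume a: "a \<in> A"
    obtain k where k: "k \<in> K"
      using K by blast
    have "d * norm (a - k) \<le> (s - f a) * M"
      using M[OF a k] below(1)[OF a] d by (intro mult_mono) auto
    then have "norm (a - k) \<le> M / d * (s - f a)"
      using d by (simp add: field_simps)
    then show "a \<in> ?T"
      using hull_subset[of K] k by (auto simp: right_diff_distrib)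
  qed
  moreover have "K \<subseteq> ?T"
  proof
    fix k assume k: "k \<in> K"
    have "0 \<le> M / d * (s - f k)"
      using below(2)[OF k] d \<open>M \<ge> 0\<close> by simp
    then show "k \<in> ?T"
      using hull_subset[of K convex] k by (auto intro!: bexI[of _ k] simp: right_diff_distrib)
  qed
  ultimately show ?thesis
    using hull_minimal[of "A \<union> K" ?T convex] y by (auto simp: right_diff_distrib)
qed

lemma bounded_linear_le_Sup:
  fixes f :: "'a::real_normed_vector \<Rightarrow> real"
  assumes "bounded_linear f" "bounded C" "c \<in> C"
  shows "f c \<le> Sup (f ` C)"
proof (rule cSup_upper)
  show "bdd_above (f ` C)"
    using assms by (intro bounded_imp_bdd_above bounded_linear_image)
qed (use assms in auto)

lemma slice_subset_closure_UN_cball: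
  fixes A K C :: "'a::real_normed_vector set"
  assumes C: "C = closed_convex_hull (A \<union> K)" "bounded C"
    and K: "K \<noteq> {}" and f: "f \<in> dual_unit_ball" and d: "d > 0"
    and sep: "\<And>a. a \<in> A \<Longrightarrow> f a + d \<le> Sup (f ` C)" and \<rho>: "\<rho> > 0"
  shows "\<exists>\<delta>>0. slice f C \<delta> \<subseteq> closure (\<Union>k\<in>convex hull K. cball k \<rho>)"
proof -
  define s where "s = Sup (f ` C)"
  have f_lin: "bounded_linear f"
    using f by (simp add: dual_unit_ball_def)
  have AK: "A \<union> K \<subseteq> C"
    unfolding C(1) closed_convex_hull_eq_hull by (rule hull_subset)
  have f_le: "f c \<le> s" if "c \<in> C" for c
    unfolding s_def using f_lin C(2) that by (rule bounded_linear_le_Sup)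
  obtain M where M: "M > 0" "\<And>a k. a \<in> C \<Longrightarrow> k \<in> C \<Longrightarrow> norm (a - k) \<le> M"
  proof -
    obtain e where "\<forall>a\<in>C. \<forall>k\<in>C. dist a k \<le> e"
      using C(2) bounded_two_points by blast
    then show thesis
      by (intro that[of "max 1 e"]) (auto simp: dist_norm intro: le_max_iff_disj[THEN iffD2])
  qed
  define \<delta> where "\<delta> = \<rho> * d / M"
  have "{y. s - \<delta> < f y} \<inter> convex hull (A \<union> K) \<subseteq> (\<Union>k\<in>convex hull K. cball k \<rho>)"
  proof clarify
    fix y assume y: "s - \<delta> < f y" "y \<in> convex hull (A \<union> K)"
    have "\<exists>k\<in>convex hull K. norm (y - k) \<le> M / d * (s - f y)"
    proof (rule convex_hull_Un_near_convex_hull[OF bounded_linear.linear[OF f_lin] K d])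
      show "norm (a - k) \<le> M" if "a \<in> A" "k \<in> K" for a k
        using that AK M(2) by auto
    qed (use M(1) sep f_le AK y(2) in \<open>auto simp: s_def\<close>)
    then obtain k where k: "k \<in> convex hull K" "norm (y - k) \<le> M / d * (s - f y)"
      by blast
    have "M / d * (s - f y) \<le> M / d * \<delta>"
      using y(1) M d by (intro mult_left_mono) auto
    also have "\<dots> = \<rho>"
      using M d by (simp add: \<delta>_def)
    finally have "dist k y \<le> \<rho>"
      using k(2) by (simp add: dist_norm norm_minus_commute)
    with k(1) show "y \<in> (\<Union>k\<in>convex hull K. cball k \<rho>)"
      by auto
  qed
  then have "closure ({y. s - \<delta> < f y} \<inter> convex hull (A \<union> K))
      \<subseteq> closure (\<Union>k\<in>convex hull K. cball k \<rho>)"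
    by (rule closure_mono)
  moreover have "open {y. s - \<delta> < f y}"
    using f_lin by (intro open_Collect_less continuous_on_const linear_continuous_on)
  then have "{y. s - \<delta> < f y} \<inter> C \<subseteq> closure ({y. s - \<delta> < f y} \<inter> convex hull (A \<union> K))"
    unfolding C(1) closed_convex_hull_def by (rule open_Int_closure_subset)
  ultimately have "{y. s - \<delta> < f y} \<inter> C \<subseteq> closure (\<Union>k\<in>convex hull K. cball k \<rho>)"
    by (rule order_trans[rotated])
  moreover have "\<delta> > 0"
    using \<rho> d M by (simp add: \<delta>_def)
  ultimately show ?thesis
    by (auto simp: slice_def s_def)
qed

lemma exists_slice_diameter_le:
  fixes A K :: "'a::real_normed_vector set"
  assumes C: "C = closed_convex_hull (A \<union> K)" "bounded C"
    and A: "closed A" "convex A" and CA: "C \<noteq> A" and \<eta>: "\<eta> > 0"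
  shows "\<exists>f\<in>dual_unit_ball. \<exists>\<delta>>0. diameter (slice f C \<delta>) \<le> diameter K + \<eta>"
proof -
  have AK: "A \<union> K \<subseteq> C"
    unfolding C(1) closed_convex_hull_eq_hull by (rule hull_subset)
  then have K_hull: "bounded (convex hull K)"
    using C(2) bounded_subset bounded_convex_hull by blast
  have "K \<noteq> {}"
    using CA A by (auto simp: C(1) closed_convex_hull_eq_hull hull_same)
  show ?thesis
  proof (cases "A = {}")
    case True
    have "C \<noteq> {}"
      using AK \<open>K \<noteq> {}\<close> by blast
    then have "slice (\<lambda>_. 0) C 1 = C"
      by (simp add: slice_def cSUP_const)
    moreover have "diameter C = diameter K"
      using True K_hull C(2) AK
      by (simp add: C(1) closed_convex_hull_def diameter_closure diameter_convex_hull bounded_subset)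
    ultimately show ?thesis
      using \<eta> by (intro bexI[of _ "\<lambda>_. 0"] exI[of _ 1]) (auto simp: dual_unit_ball_def onorm_zero)
  next
    case False
    obtain x where "x \<in> C" "x \<notin> A"
      using AK CA by blast
    then obtain f d where f: "f \<in> dual_unit_ball" "d > 0" "\<And>a. a \<in> A \<Longrightarrow> f a + d \<le> f x"
      using separation_closed_convex[OF A] by blast
    have "f x \<le> Sup (f ` C)"
      using f(1) C(2) \<open>x \<in> C\<close> by (intro bounded_linear_le_Sup) (simp_all add: dual_unit_ball_def)
    then have "f a + d \<le> Sup (f ` C)" if "a \<in> A" for a
      using f(3)[OF that] by linarith
    then obtain \<delta> where \<delta>: "\<delta> > 0" "slice f C \<delta> \<subseteq> closure (\<Union>k\<in>convex hull K. cball k (\<eta> / 2))"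
      using slice_subset_closure_UN_cball[OF C \<open>K \<noteq> {}\<close> f(1,2), of "\<eta> / 2"] \<eta> by auto
    have N: "bounded (\<Union>k\<in>convex hull K. cball k (\<eta> / 2))"
      using K_hull by (rule bounded_UN_cball)
    have "diameter (slice f C \<delta>) \<le> diameter (closure (\<Union>k\<in>convex hull K. cball k (\<eta> / 2)))"
      using \<delta>(2) bounded_closure[OF N] by (rule diameter_subset)
    also have "\<dots> = diameter (\<Union>k\<in>convex hull K. cball k (\<eta> / 2))"
      using N by (rule diameter_closure)
    also have "\<dots> \<le> diameter K + \<eta>"
      using diameter_UN_cball_le[OF K_hull, of "\<eta> / 2"] \<eta> K_hull AK C(2)
      by (simp add: diameter_convex_hull bounded_subset)
    finally show ?thesis
      using f(1) \<delta>(1) by blast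
  qed
qed

lemma closed_convex_hull_Un_eq_if_non_eps_dentable:
  fixes A K :: "'a::real_normed_vector set"
  assumes nd: "non_eps_dentable \<epsilon> C" and C: "C = closed_convex_hull (A \<union> K)"
    and K: "diameter K < \<epsilon>" and A: "closed A" "convex A"
  shows "C = A"
proof (rule ccontr)
  assume "C \<noteq> A"
  moreover have "bounded C"
    using nd by (simp add: non_eps_dentable_def)
  ultimately obtain f \<delta> where "f \<in> dual_unit_ball" "\<delta> > 0" "diameter (slice f C \<delta>) \<le> \<epsilon>"
    using exists_slice_diameter_le[OF C _ A, of "\<epsilon> - diameter K"] K by auto
  moreover have "\<forall>f\<in>dual_unit_ball. \<forall>\<delta>>0. diameter (slice f C \<delta>) > \<epsilon>"
    using nd by (simp add: non_eps_dentable_def)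
  ultimately show False
    by fastforce
qed

lemma closed_convex_hull_Un_Union_eq_if_non_eps_dentable:
  fixes A :: "'a::real_normed_vector set"
  assumes nd: "non_eps_dentable \<epsilon> C" and "finite G" "\<And>K. K \<in> G \<Longrightarrow> diameter K < \<epsilon>"
    and "C = closed_convex_hull (A \<union> \<Union>G)" "closed A" "convex A"
  shows "C = A"
  using assms(2-)
proof (induction G arbitrary: A rule: finite_induct)
  case empty
  then show ?case
    by (simp add: closed_convex_hull_eq_hull hull_same)
next
  case (insert K G)
  \<comment> \<open>absorb \<open>K\<close> into \<open>A\<close>, conclude by induction, then peel \<open>K\<close> off again\<close>
  define A' where "A' = closed_convex_hull (A \<union> K)"
  have "closed_convex_hull (A \<union> \<Union>(insert K G)) = closed_convex_hull (A' \<union> \<Union>G)"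
    unfolding A'_def closed_convex_hull_eq_hull Union_insert Un_assoc[symmetric] by (rule hull_Un_left)
  moreover have "closed A'" "convex A'"
    by (simp_all add: A'_def closed_convex_hull_def convex_closure)
  ultimately have "C = A'"
    using insert.prems insert.IH by simp
  then show ?case
    using nd insert.prems closed_convex_hull_Un_eq_if_non_eps_dentable unfolding A'_def by blast
qed

theorem mainTheorem2:
  fixes C C' D :: "'a::banach set" and \<epsilon> :: real
  assumes "\<epsilon> > 0"
    and "closed C" "bounded C" "convex C" "non_eps_dentable \<epsilon> C"
    and "C' \<subseteq> C" "closed C'" "convex C'"
    and "D \<subseteq> C" "kuratowski_mnc D < ereal \<epsilon>"
    and "C = closed_convex_hull (C' \<union> D)"
  shows "C = C'"
proof -
  obtain e F where e: "e < \<epsilon>" and F: "finite F" "D \<subseteq> \<Union>F"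
    and F_small: "\<And>S. S \<in> F \<Longrightarrow> bounded S \<and> diameter S \<le> e"
    using assms(10) unfolding kuratowski_mnc_def Inf_less_iff by auto
  define G where "G = (\<lambda>S. S \<inter> D) ` F"
  have "diameter K < \<epsilon>" if "K \<in> G" for K
  proof -
    obtain S where S: "S \<in> F" "K = S \<inter> D"
      using \<open>K \<in> G\<close> by (auto simp: G_def)
    then have "diameter K \<le> diameter S"
      using F_small[OF S(1)] by (simp add: diameter_subset)
    then show ?thesis
      using F_small[OF S(1)] e by linarith
  qed
  moreover have "finite G"
    using F(1) by (simp add: G_def)
  moreover have "\<Union>G = D"
    using F(2) by (auto simp: G_def)
  then have "C = closed_convex_hull (C' \<union> \<Union>G)"
    using assms(11) by simp
  ultimately show ?thesis
    using closed_convex_hull_Un_Union_eq_if_non_eps_dentable assms(5,7,8) by blast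
qed

end
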